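(* Let $\mathcal{G}=(\mathcal{V},\mathcal{A})$, $|\mathcal{V}|=n$, be the information-flow graph of a single-sender single-uniprior index-coding instance in which every message consists of a single bit ($q_i=1$ for all $i$). Then \[ \ell^*(\mathcal{G}) = n - |\mathcal{L}(\mathcal{G})| - N_{\mathrm{SCC}}(\mathcal{G}), \] where $N_{\mathrm{SCC}}(\mathcal{G})$ is the number of leaf SCCs of $\mathcal{G}$.
   Context: Single-sender single-uniprior index coding: there are $n$ receivers and $n$ independent messages $x_1,\dots,x_n$; message $x_i$ consists of $q_i\ge 1$ bits, each independently uniformly distributed on $\{0,1\}$. A single sender knows all messages. Receiver $i$ knows $x_i$ a priori and requests a set $\mathcal{W}_i$ of messages with $x_i\notin\mathcal{W}_i$. The information-flow graph is the directed graph $\mathcal{G}=(\mathcal{V},\mathcal{A})$ with $\mathcal{V}=\{1,\dots,n\}$ and an arc $(j\to i)\in\mathcal{A}$ iff $x_j\in\mathcal{W}_i$. An index code of length $\ell$ consists of an encoding function $E:\{0,1\}^{\sum_i q_i}\to\{0,1\}^\ell$ and, for each receiver $i$, a decoding function $D_i$ such that $D_i(E(x_1,\dots,x_n),x_i)$ equals the tuple of messages in $\mathcal{W}_i$ for all values of the messages. $\ell^*(\mathcal{G})$ denotes the minimum length of an index code. A leaf vertex is a vertex with no outgoing arcs; $\mathcal{L}(\mathcal{G})$ is the set of leaf vertices. A strongly connected component (SCC) is a maximal subgraph in which every ordered pair of vertices is joined by a directed path inside the subgraph. A leaf SCC is an SCC with at least two vertices from which no arc goes to a vertex outside the SCC.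 *)

theory Defs
  imports Main
begin

text \<open>Information-flow graph on vertex set {1..n}; arcs A :: (nat \<times> nat) set,
  (j,i) \<in> A iff receiver i requests message x_j.\<close>

definition msgs :: "nat \<Rightarrow> (nat \<Rightarrow> bool) set" where
  "msgs n = {x. \<forall>j. j \<notin> {1..n} \<longrightarrow> x j = False}"

definition wants :: "(nat \<times> nat) set \<Rightarrow> nat \<Rightarrow> nat set" where
  "wants A i = {j. (j, i) \<in> A}"

text \<open>An index code of length l: an encoder E into bit strings of length l
  and decoders D i, where D i receives the codeword and x_i and outputs
  (as a function of the index) the requested messages.\<close>
definition is_index_code ::
  "nat \<Rightarrow> (nat \<times> nat) set \<Rightarrow> nat \<Rightarrow> ((nat \<Rightarrow> bool) \<Rightarrow> bool list)
     \<Rightarrow> (nat \<Rightarrow> bool list \<Rightarrow> bool \<Rightarrow> nat \<Rightarrow> bool) \<Rightarrow> bool" where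
  "is_index_code n A l E D \<longleftrightarrow>
     (\<forall>x \<in> msgs n. length (E x) = l) \<and>
     (\<forall>x \<in> msgs n. \<forall>i \<in> {1..n}. \<forall>j \<in> wants A i. D i (E x) (x i) j = x j)"

definition has_index_code :: "nat \<Rightarrow> (nat \<times> nat) set \<Rightarrow> nat \<Rightarrow> bool" where
  "has_index_code n A l \<longleftrightarrow> (\<exists>E D. is_index_code n A l E D)"

definition opt_len :: "nat \<Rightarrow> (nat \<times> nat) set \<Rightarrow> nat" where
  "opt_len n A = (LEAST l. has_index_code n A l)"

definition leaf_vertices :: "nat \<Rightarrow> (nat \<times> nat) set \<Rightarrow> nat set" where
  "leaf_vertices n A = {i \<in> {1..n}. \<not> (\<exists>j. (i, j) \<in> A)}"

definition strongly_connected :: "(nat \<times> nat) set \<Rightarrow> nat set \<Rightarrow> bool" where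
  "strongly_connected A S \<longleftrightarrow>
     (\<forall>u \<in> S. \<forall>v \<in> S. (u, v) \<in> (A \<inter> (S \<times> S))\<^sup>*)"

definition is_scc :: "nat \<Rightarrow> (nat \<times> nat) set \<Rightarrow> nat set \<Rightarrow> bool" where
  "is_scc n A S \<longleftrightarrow> S \<noteq> {} \<and> S \<subseteq> {1..n} \<and> strongly_connected A S \<and>
     (\<forall>T. S \<subseteq> T \<and> T \<subseteq> {1..n} \<and> strongly_connected A T \<longrightarrow> T = S)"

definition is_leaf_scc :: "nat \<Rightarrow> (nat \<times> nat) set \<Rightarrow> nat set \<Rightarrow> bool" where
  "is_leaf_scc n A S \<longleftrightarrow> is_scc n A S \<and> card S \<ge> 2 \<and>
     (\<forall>u v. u \<in> S \<and> (u, v) \<in> A \<longrightarrow> v \<in> S)"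

definition N_SCC :: "nat \<Rightarrow> (nat \<times> nat) set \<Rightarrow> nat" where
  "N_SCC n A = card {S. is_leaf_scc n A S}"

end

theory Submission
  imports Defs
begin

text \<open>Let \<open>T\<close> consist of the leaves together with one representative (the minimum) of each
  leaf SCC. Every vertex reaches \<open>T\<close>: a vertex whose reachable set is smallest is either a
  leaf or generates a leaf SCC. Hence for messages vanishing on \<open>T\<close> the receivers, decoding
  backwards along paths ending in \<open>T\<close>, recover everything from the codeword, so the code
  must separate all \<open>2^(n - |T|)\<close> of them. Conversely, sending \<open>x i\<close> for each non-leaf outside the leaf SCCs
  and \<open>x i \<noteq> x r\<close> for each non-representative \<open>i\<close> of a leaf SCC with representative \<open>r\<close>
  is a code of length \<open>n - |T|\<close>.\<close>

lemma strongly_connected_Un: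
  assumes "strongly_connected A S" "strongly_connected A S'" "w \<in> S" "w \<in> S'"
  shows "strongly_connected A (S \<union> S')"
  unfolding strongly_connected_def
proof (intro ballI)
  let ?R = "A \<inter> (S \<union> S') \<times> (S \<union> S')"
  have lift: "(A \<inter> X \<times> X)\<^sup>* \<subseteq> ?R\<^sup>*" if "X \<subseteq> S \<union> S'" for X
    using that by (intro rtrancl_mono) blast
  fix u v assume "u \<in> S \<union> S'" "v \<in> S \<union> S'"
  then have "(u, w) \<in> ?R\<^sup>*" "(w, v) \<in> ?R\<^sup>*"
    using assms lift[of S] lift[of S'] unfolding strongly_connected_def by blast+
  then show "(u, v) \<in> ?R\<^sup>*" by (rule rtrancl_trans)
qed

lemma is_scc_disjoint:
  assumes S: "is_scc n A S" and S': "is_scc n A S'" and "x \<in> S" "x \<in> S'"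
  shows "S = S'"
proof -
  have "strongly_connected A (S \<union> S')" "S \<union> S' \<subseteq> {1..n}"
    using assms strongly_connected_Un[of A S S' x] unfolding is_scc_def by auto
  then have "S \<union> S' = S" "S \<union> S' = S'"
    using S S' unfolding is_scc_def by (metis Un_upper1 Un_upper2)+
  then show ?thesis by blast
qed

lemma leaf_scc_disjoint: "pairwise disjnt {S. is_leaf_scc n A S}"
  unfolding pairwise_def disjnt_def is_leaf_scc_def
  using is_scc_disjoint[of n A] by auto

lemma finite_leaf_scc: "is_leaf_scc n A S \<Longrightarrow> finite S"
  unfolding is_leaf_scc_def is_scc_def using finite_subset[of S "{1..n}"] by simp

lemma leaf_scc_nonempty: "is_leaf_scc n A S \<Longrightarrow> S \<noteq> {}"
  unfolding is_leaf_scc_def is_scc_def by simp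

lemma leaf_vertices_subset: "leaf_vertices n A \<subseteq> {1..n}"
  unfolding leaf_vertices_def by blast

lemma leaf_scc_non_leaf:
  assumes "is_leaf_scc n A S"
  shows "S \<subseteq> {1..n} - leaf_vertices n A"
proof
  fix u assume u: "u \<in> S"
  have "\<not> S \<subseteq> {u}"
    using assms finite_leaf_scc[OF assms] card_mono[of "{u}" S]
    unfolding is_leaf_scc_def by force
  then obtain v where "v \<in> S" "v \<noteq> u" by blast
  then have "(u, v) \<in> (A \<inter> S \<times> S)\<^sup>*"
    using assms u unfolding is_leaf_scc_def is_scc_def strongly_connected_def by blast
  with \<open>v \<noteq> u\<close> obtain w where "(u, w) \<in> A" by (blast elim: converse_rtranclE)
  moreover have "u \<in> {1..n}" using assms u unfolding is_leaf_scc_def is_scc_def by blast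
  ultimately show "u \<in> {1..n} - leaf_vertices n A" unfolding leaf_vertices_def by blast
qed

lemma rtrancl_restrict_closed:
  assumes "(u, v) \<in> A\<^sup>*" "u \<in> C" "A `` C \<subseteq> C"
  shows "(u, v) \<in> (A \<inter> C \<times> C)\<^sup>*"
proof -
  from assms(1,2) have "(u, v) \<in> (A \<inter> C \<times> C)\<^sup>* \<and> v \<in> C"
  proof (induction rule: rtrancl_induct)
    case (step y z)
    then have "(y, z) \<in> A \<inter> C \<times> C" using assms(3) by blast
    with step show ?case by (blast intro: rtrancl_into_rtrancl)
  qed simp
  then show ?thesis ..
qed

text \<open>A vertex whose reachable set has least cardinality among those reachable from \<open>v\<close>
  is reached back from everything it reaches.\<close>
lemma ex_terminal_reachable:
  assumes "finite (A\<^sup>* `` {v})"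
  shows "\<exists>w. (v, w) \<in> A\<^sup>* \<and> (\<forall>u. (w, u) \<in> A\<^sup>* \<longrightarrow> (u, w) \<in> A\<^sup>*)"
proof -
  obtain w where vw: "(v, w) \<in> A\<^sup>*"
    and least: "\<And>u. (v, u) \<in> A\<^sup>* \<Longrightarrow> card (A\<^sup>* `` {w}) \<le> card (A\<^sup>* `` {u})"
    using ex_has_least_nat[of "\<lambda>u. (v, u) \<in> A\<^sup>*" v "\<lambda>u. card (A\<^sup>* `` {u})"] by blast
  have "(u, w) \<in> A\<^sup>*" if wu: "(w, u) \<in> A\<^sup>*" for u
  proof -
    have sub: "A\<^sup>* `` {u} \<subseteq> A\<^sup>* `` {w}" using wu by (auto intro: rtrancl_trans)
    have "A\<^sup>* `` {w} \<subseteq> A\<^sup>* `` {v}" using vw by (auto intro: rtrancl_trans)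
    then have "finite (A\<^sup>* `` {w})" using assms by (rule finite_subset)
    moreover have "card (A\<^sup>* `` {w}) \<le> card (A\<^sup>* `` {u})"
      using vw wu by (intro least) (rule rtrancl_trans)
    ultimately have "A\<^sup>* `` {u} = A\<^sup>* `` {w}" using sub by (meson card_seteq)
    then show ?thesis by blast
  qed
  with vw show ?thesis by blast
qed

lemma terminal_reachable_is_scc:
  assumes "w \<in> {1..n}" "A\<^sup>* `` {w} \<subseteq> {1..n}"
    and returns: "\<forall>u. (w, u) \<in> A\<^sup>* \<longrightarrow> (u, w) \<in> A\<^sup>*"
  shows "is_scc n A (A\<^sup>* `` {w})"
proof -
  let ?C = "A\<^sup>* `` {w}"
  have closed: "A `` ?C \<subseteq> ?C" by (auto elim: rtrancl_into_rtrancl)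
  have "strongly_connected A ?C"
    unfolding strongly_connected_def
  proof (intro ballI)
    fix u u' assume "u \<in> ?C" "u' \<in> ?C"
    then have "(u, w) \<in> A\<^sup>*" "(w, u') \<in> A\<^sup>*" using returns by auto
    then have "(u, u') \<in> A\<^sup>*" by (rule rtrancl_trans)
    then show "(u, u') \<in> (A \<inter> ?C \<times> ?C)\<^sup>*"
      using \<open>u \<in> ?C\<close> closed by (rule rtrancl_restrict_closed)
  qed
  moreover have w: "w \<in> ?C" by simp
  moreover have "T = ?C" if "?C \<subseteq> T" "strongly_connected A T" for T
  proof -
    have "w \<in> T" using that(1) w by (rule subsetD)
    then have "T \<subseteq> ?C"
      using that(2) rtrancl_mono[of "A \<inter> T \<times> T" A] unfolding strongly_connected_def by blast
    with that(1) show ?thesis by (rule equalityI[rotated])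
  qed
  ultimately show ?thesis using assms(2) unfolding is_scc_def by auto
qed

lemma reaches_leaf_or_leaf_scc:
  assumes A: "A \<subseteq> {1..n} \<times> {1..n}" and loop_free: "\<forall>i. (i, i) \<notin> A"
    and v: "v \<in> {1..n}"
  shows "\<exists>t \<in> leaf_vertices n A \<union> Min ` {S. is_leaf_scc n A S}. (v, t) \<in> A\<^sup>*"
proof -
  have in_range: "A\<^sup>* `` {u} \<subseteq> {1..n}" if "u \<in> {1..n}" for u
  proof
    fix x assume "x \<in> A\<^sup>* `` {u}"
    then have "(u, x) \<in> A\<^sup>*" by simp
    then show "x \<in> {1..n}" by (induction rule: rtrancl_induct) (use that A in auto)
  qed
  have "finite (A\<^sup>* `` {v})" using in_range[OF v] by (rule finite_subset) simp
  from ex_terminal_reachable[OF this] obtain w where vw: "(v, w) \<in> A\<^sup>*"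
    and returns: "\<forall>u. (w, u) \<in> A\<^sup>* \<longrightarrow> (u, w) \<in> A\<^sup>*"
    by blast
  let ?C = "A\<^sup>* `` {w}"
  have w: "w \<in> {1..n}" using in_range[OF v] vw by (simp add: subset_iff)
  have fin: "finite ?C" using in_range[OF w] by (rule finite_subset) simp
  show ?thesis
  proof (cases "card ?C \<ge> 2")
    case True
    have "A `` ?C \<subseteq> ?C" by (auto elim: rtrancl_into_rtrancl)
    then have "is_leaf_scc n A ?C"
      unfolding is_leaf_scc_def
      using terminal_reachable_is_scc[OF w in_range[OF w] returns] True by blast
    moreover have "Min ?C \<in> ?C" using fin by (intro Min_in) auto
    then have "(v, Min ?C) \<in> A\<^sup>*" using rtrancl_trans[OF vw] by simp
    ultimately show ?thesis by blast
  next
    case False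
    then have "?C = {w}" using fin card_le_Suc0_iff_eq[OF fin] by auto
    have "(w, j) \<notin> A" for j
    proof
      assume "(w, j) \<in> A"
      then have "j \<in> ?C" by auto
      with \<open>?C = {w}\<close> \<open>(w, j) \<in> A\<close> loop_free show False by simp
    qed
    then have "w \<in> leaf_vertices n A" using w unfolding leaf_vertices_def by blast
    with vw show ?thesis by blast
  qed
qed

text \<open>Receiver \<open>t\<close> decodes the messages of its in-neighbours from the codeword and \<open>x t\<close>,
  so agreement at \<open>t\<close> propagates backwards along every path into \<open>t\<close>.\<close>
lemma index_code_agree_along_path:
  assumes code: "is_index_code n A l E D" and A: "A \<subseteq> {1..n} \<times> {1..n}"
    and msgs: "x \<in> msgs n" "y \<in> msgs n" and same_code: "E x = E y"
    and path: "(j, t) \<in> A\<^sup>*" and agree: "x t = y t"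
  shows "x j = y j"
  using path agree
proof (induction rule: converse_rtrancl_induct)
  case (step v v')
  then have "v' \<in> {1..n}" "v \<in> wants A v'" using A unfolding wants_def by auto
  then have decode: "D v' (E z) (z v') v = z v" if "z \<in> msgs n" for z
    using code that unfolding is_index_code_def by blast
  have "x v = D v' (E x) (x v') v" using decode[OF msgs(1)] ..
  also have "\<dots> = D v' (E y) (y v') v" using same_code step.IH step.prems by simp
  also have "\<dots> = y v" using decode[OF msgs(2)] .
  finally show ?case .
qed

lemma card_supported_on:
  assumes "finite S"
  shows "card {x :: nat \<Rightarrow> bool. \<forall>j. j \<notin> S \<longrightarrow> \<not> x j} = 2 ^ card S"
proof -
  have "bij_betw Collect {x. \<forall>j. j \<notin> S \<longrightarrow> \<not> x j} (Pow S)"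
    by (rule bij_betw_byWitness[where f' = "\<lambda>X j. j \<in> X"]) auto
  then show ?thesis using assms by (simp add: bij_betw_same_card card_Pow)
qed

lemma index_code_length_ge:
  assumes code: "is_index_code n A l E D" and A: "A \<subseteq> {1..n} \<times> {1..n}"
    and S: "S \<subseteq> {1..n}" and escape: "\<forall>j \<in> S. \<exists>t. t \<notin> S \<and> (j, t) \<in> A\<^sup>*"
  shows "card S \<le> l"
proof -
  define X where "X = {x :: nat \<Rightarrow> bool. \<forall>j. j \<notin> S \<longrightarrow> \<not> x j}"
  have X_msgs: "X \<subseteq> msgs n" using S unfolding X_def msgs_def by blast
  have "inj_on E X"
  proof (rule inj_onI, rule ext)
    fix x y j assume x: "x \<in> X" and y: "y \<in> X" and same_code: "E x = E y"
    show "x j = y j"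
    proof (cases "j \<in> S")
      case True
      then obtain t where "t \<notin> S" "(j, t) \<in> A\<^sup>*" using escape by blast
      then show ?thesis
        using index_code_agree_along_path[OF code A _ _ same_code] x y X_msgs
        unfolding X_def by blast
    qed (use x y in \<open>simp add: X_def\<close>)
  qed
  moreover have "E ` X \<subseteq> {xs. set xs \<subseteq> UNIV \<and> length xs = l}"
    using code X_msgs unfolding is_index_code_def by blast
  ultimately have "card X \<le> card {xs :: bool list. set xs \<subseteq> UNIV \<and> length xs = l}"
    by (intro card_inj_on_le finite_lists_length_eq) simp_all
  then have "(2::nat) ^ card S \<le> 2 ^ l"
    using card_supported_on[OF finite_subset[OF S]] card_lists_length_eq[of "UNIV :: bool set" l]
    unfolding X_def by (simp add: card_UNIV_bool)
  then show ?thesis by simp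
qed

lemma bits_packable:
  assumes "finite P"
  obtains pack :: "(nat \<Rightarrow> bool) \<Rightarrow> bool list" and unpack
  where "\<And>g. length (pack g) = card P" and "\<And>g j. j \<in> P \<Longrightarrow> unpack (pack g) j = g j"
proof -
  define xs where "xs = sorted_list_of_set P"
  define idx where "idx j = (LEAST k. xs ! k = j)" for j
  have unpack: "map g xs ! idx j = g j" if "j \<in> P" for g j
  proof -
    have "j \<in> set xs" using that assms unfolding xs_def by simp
    then obtain k where k: "k < length xs" "xs ! k = j" by (auto simp: in_set_conv_nth)
    have "idx j \<le> k" unfolding idx_def using k(2) by (rule Least_le)
    moreover have "xs ! idx j = j" unfolding idx_def using k(2) by (rule LeastI)
    ultimately show ?thesis using k(1) by simp
  qed
  have length: "length (map g xs) = card P" for g unfolding xs_def by simp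
  from length unpack show ?thesis by (rule that)
qed

definition class_of :: "'a set set \<Rightarrow> 'a \<Rightarrow> 'a set" where
  "class_of F j = (THE S. S \<in> F \<and> j \<in> S)"

lemma class_of_eq:
  "pairwise disjnt F \<Longrightarrow> S \<in> F \<Longrightarrow> j \<in> S \<Longrightarrow> class_of F j = S"
  unfolding class_of_def pairwise_def disjnt_def by (rule the_equality) blast+

lemma notin_Min_image:
  assumes disj: "pairwise disjnt F" and "\<forall>S \<in> F. finite S \<and> S \<noteq> {}"
    and S: "S \<in> F" "j \<in> S" "j \<noteq> Min S"
  shows "j \<notin> Min ` F"
proof
  assume "j \<in> Min ` F"
  then obtain S' where S': "S' \<in> F" "j = Min S'" by blast
  then have "j \<in> S'" using assms(2) Min_in by blast
  then have "S' = S" using disj S S'(1) unfolding pairwise_def disjnt_def by blast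
  with S S' show False by simp
qed

text \<open>A receiver wanting a message of a class \<open>S\<close> lies in \<open>S\<close> itself, since \<open>S\<close> is closed
  under arcs, and its own message and bit recover \<open>x (Min S)\<close>.\<close>
lemma has_index_code_classes:
  assumes A: "A \<subseteq> {1..n} \<times> {1..n}" and disj: "pairwise disjnt F"
    and finite_nonempty: "\<forall>S \<in> F. finite S \<and> S \<noteq> {}"
    and non_leaf: "\<forall>S \<in> F. S \<subseteq> {1..n} - leaf_vertices n A"
    and closed: "\<forall>S \<in> F. \<forall>u v. u \<in> S \<and> (u, v) \<in> A \<longrightarrow> v \<in> S"
  shows "has_index_code n A (card ({1..n} - leaf_vertices n A - Min ` F))"
proof -
  let ?P = "{1..n} - leaf_vertices n A - Min ` F"
  have "finite ?P" by simp
  then obtain pack :: "(nat \<Rightarrow> bool) \<Rightarrow> bool list" and unpack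
    where pack: "\<And>g. length (pack g) = card ?P"
      and unpack: "\<And>g j. j \<in> ?P \<Longrightarrow> unpack (pack g) j = g j"
    by (rule bits_packable) auto
  define rep where "rep j = Min (class_of F j)" for j
  define bit where "bit x i = (if i \<in> \<Union>F then x i \<noteq> x (rep i) else x i)" for x i
  define root where "root r w b = (if r = rep r then b else unpack w r \<noteq> b)" for r w b
  define dec where "dec r w b j =
    (if j \<notin> \<Union>F then unpack w j
     else if j = rep j then root r w b else unpack w j \<noteq> root r w b)" for r w b j
  have rep: "rep j = Min S" if "S \<in> F" "j \<in> S" for S j
    using class_of_eq[OF disj that] unfolding rep_def by simp
  have sent: "j \<in> ?P" if "S \<in> F" "j \<in> S" "j \<noteq> Min S" for S j
    using notin_Min_image[OF disj finite_nonempty that] non_leaf that by blast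
  have "dec r (pack (bit x)) (x r) j = x j" if arc: "(j, r) \<in> A" for x r j
  proof (cases "j \<in> \<Union>F")
    case True
    then obtain S where S: "S \<in> F" "j \<in> S" by blast
    then have r: "r \<in> S" using closed arc by blast
    have root: "root r (pack (bit x)) (x r) = x (Min S)"
    proof (cases "r = Min S")
      case False
      have "unpack (pack (bit x)) r = bit x r" using unpack[OF sent[OF S(1) r False]] .
      also have "\<dots> = (x r \<noteq> x (Min S))" using S(1) r rep[OF S(1) r] unfolding bit_def by auto
      finally show ?thesis using False rep[OF S(1) r] unfolding root_def by auto
    qed (use rep[OF S(1) r] in \<open>auto simp: root_def\<close>)
    show ?thesis
    proof (cases "j = Min S")
      case False
      have "unpack (pack (bit x)) j = (x j \<noteq> x (Min S))"
        using unpack[OF sent[OF S False]] S rep[OF S] unfolding bit_def by auto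
      then show ?thesis using False True rep[OF S] root unfolding dec_def by auto
    qed (use True rep[OF S] root in \<open>simp add: dec_def\<close>)
  next
    case False
    have "Min S \<in> S" if "S \<in> F" for S using finite_nonempty that by (blast intro: Min_in)
    then have "j \<notin> Min ` F" using False by blast
    moreover have "j \<in> {1..n} - leaf_vertices n A" using A arc unfolding leaf_vertices_def by blast
    ultimately show ?thesis using False unpack unfolding dec_def bit_def by simp
  qed
  then have "is_index_code n A (card ?P) (\<lambda>x. pack (bit x)) dec"
    unfolding is_index_code_def wants_def using pack by blast
  then show ?thesis unfolding has_index_code_def by blast
qed

lemma opt_len_eqI:
  assumes "has_index_code n A l" "\<And>l' E D. is_index_code n A l' E D \<Longrightarrow> l \<le> l'"
  shows "opt_len n A = l"
  unfolding opt_len_def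
proof (rule Least_equality)
  show "l \<le> l'" if "has_index_code n A l'" for l'
    using that assms(2) unfolding has_index_code_def by blast
qed (rule assms(1))

lemma card_Diff_Min_image:
  assumes "finite B" "pairwise disjnt F" "\<forall>S \<in> F. finite S \<and> S \<noteq> {} \<and> S \<subseteq> B"
  shows "card (B - Min ` F) + card F = card B"
proof -
  have Min_in: "Min S \<in> S" if "S \<in> F" for S using assms(3) that by (blast intro: Min_in)
  have "inj_on Min F"
  proof (rule inj_onI)
    fix S S' assume "S \<in> F" "S' \<in> F" "Min S = Min S'"
    then have "Min S \<in> S \<inter> S'" using Min_in[of S] Min_in[of S'] by simp
    with \<open>S \<in> F\<close> \<open>S' \<in> F\<close> assms(2) show "S = S'"
      unfolding pairwise_def disjnt_def by blast
  qed
  moreover have "Min ` F \<subseteq> B" using assms(3) Min_in by blast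
  ultimately show ?thesis
    using assms(1) card_mono[of B "Min ` F"]
    by (simp add: card_Diff_subset finite_subset card_image)
qed

theorem corollary1:
  fixes n :: nat and A :: "(nat \<times> nat) set"
  assumes "A \<subseteq> {1..n} \<times> {1..n}"
    and "\<forall>i. (i, i) \<notin> A"
  shows "int (opt_len n A) = int n - int (card (leaf_vertices n A)) - int (N_SCC n A)"
proof -
  let ?F = "{S. is_leaf_scc n A S}" and ?L = "leaf_vertices n A"
  let ?S0 = "{1..n} - ?L - Min ` ?F"
  have classes: "\<forall>S \<in> ?F. finite S \<and> S \<noteq> {} \<and> S \<subseteq> {1..n} - ?L"
    using finite_leaf_scc leaf_scc_nonempty leaf_scc_non_leaf by simp
  have closed: "\<forall>S \<in> ?F. \<forall>u v. u \<in> S \<and> (u, v) \<in> A \<longrightarrow> v \<in> S"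
    unfolding is_leaf_scc_def by blast
  have escape: "\<forall>j \<in> ?S0. \<exists>t. t \<notin> ?S0 \<and> (j, t) \<in> A\<^sup>*"
  proof
    fix j assume "j \<in> ?S0"
    then obtain t where "t \<in> ?L \<union> Min ` ?F" "(j, t) \<in> A\<^sup>*"
      using reaches_leaf_or_leaf_scc[OF assms] by blast
    then show "\<exists>t. t \<notin> ?S0 \<and> (j, t) \<in> A\<^sup>*" by blast
  qed
  have "opt_len n A = card ?S0"
  proof (rule opt_len_eqI)
    show "has_index_code n A (card ?S0)"
      using classes by (intro has_index_code_classes[OF assms(1) leaf_scc_disjoint _ _ closed]) auto
    show "card ?S0 \<le> l" if "is_index_code n A l E D" for l E D
      using that assms(1) _ escape by (rule index_code_length_ge) blast
  qed
  moreover have "card ?S0 + N_SCC n A = card ({1..n} - ?L)"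
    using card_Diff_Min_image[OF _ leaf_scc_disjoint classes] by (simp add: N_SCC_def)
  moreover have "card ({1..n} - ?L) + card ?L = n"
    using card_Diff_subset[OF finite_subset leaf_vertices_subset, OF leaf_vertices_subset]
      card_mono[OF _ leaf_vertices_subset]
    by simp
  ultimately show ?thesis by linarith
qed

end
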